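(* Let $d\ge0$ and let $L:\mathbb{C}_{2d+2}[z,\overline z]\to\mathbb{C}$ be a real linear functional, non-negative on hermitian squares ($L(|f(z)|^2)\ge0$ for all $f\in\mathbb{C}_{d+1}[z]$), such that multiplication by $z$ induces a well-defined map $M_z:A_d\to A_{d+1}$ (i.e. $p\in\mathbb{C}_d[z]$, $L(|p|^2)=0$ imply $L(|zp|^2)=0$). Let $M=\pi_d M_z|_{A_d}$ and let $\mathbf 1\in A_d$ be the class of the constant polynomial $1$. Then $$L(p\,\overline q)=\langle p(M)\mathbf 1,\, q(M)\mathbf 1\rangle_L$$ for all $p,q\in\mathbb{C}_{d+1}[z]$ with $\deg p+\deg q\le 2d+1$ (i.e. $p$ and $q$ are not both of degree $d+1$).
   Context: Notation: $\mathbb{C}_n[z]$ is the space of complex polynomials in the complex variable $z$ of degree $\le n$; $\mathbb{C}_n[z,\overline z]$ is the space of polynomials in $z,\overline z$ of total degree $\le n$. $L$ real means $L(\overline p)=\overline{L(p)}$. The form $\langle p,q\rangle_L=L(p\overline q)$ is positive semidefinite on $\mathbb{C}_{d+1}[z]$ with null space $N=\{p: L(|p|^2)=0\}$; $A_k=\mathbb{C}_k[z]/(\mathbb{C}_k[z]\cap N)$ ($k\le d+1$) are finite-dimensional Hilbert spaces with $A_d\subseteq A_{d+1}$, and $\pi_d$ is the orthogonal projection of $A_{d+1}$ onto $A_d$. $M_z:A_d\to A_{d+1}$ is induced by $p\mapsto zp$. For a polynomial $p(z)=\sum_j p_j z^j$, $p(M)=\sum_j p_jM^j$. *)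

theory Defs
  imports Complex_Main "HOL-Computational_Algebra.Polynomial"
begin

text \<open>Polynomials in z and conj z are represented by their coefficient functions:
  f j k is the coefficient of the monomial z^j (conj z)^k.\<close>
type_synonym bipoly = "nat \<Rightarrow> nat \<Rightarrow> complex"

definition in_bipoly :: "nat \<Rightarrow> bipoly \<Rightarrow> bool" where
  "in_bipoly n f \<longleftrightarrow> (\<forall>j k. n < j + k \<longrightarrow> f j k = 0)"

text \<open>Complex conjugate of a bivariate polynomial: conj(z^j conj(z)^k) = z^k conj(z)^j.\<close>
definition biconj :: "bipoly \<Rightarrow> bipoly" where
  "biconj f = (\<lambda>j k. cnj (f k j))"

text \<open>The element p(z) * conj(q(z)) of C[z, conj z].\<close>
definition herm :: "complex poly \<Rightarrow> complex poly \<Rightarrow> bipoly" where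
  "herm p q = (\<lambda>j k. coeff p j * cnj (coeff q k))"

definition lin_on :: "nat \<Rightarrow> (bipoly \<Rightarrow> complex) \<Rightarrow> bool" where
  "lin_on n L \<longleftrightarrow>
     (\<forall>f g. in_bipoly n f \<longrightarrow> in_bipoly n g \<longrightarrow> L (\<lambda>j k. f j k + g j k) = L f + L g) \<and>
     (\<forall>c f. in_bipoly n f \<longrightarrow> L (\<lambda>j k. c * f j k) = c * L f)"

definition real_on :: "nat \<Rightarrow> (bipoly \<Rightarrow> complex) \<Rightarrow> bool" where
  "real_on n L \<longleftrightarrow> (\<forall>f. in_bipoly n f \<longrightarrow> L (biconj f) = cnj (L f))"

definition ipL :: "(bipoly \<Rightarrow> complex) \<Rightarrow> complex poly \<Rightarrow> complex poly \<Rightarrow> complex" where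
  "ipL L p q = L (herm p q)"

text \<open>Orthogonal projection pi_d of A_{d+1} onto A_d, on representatives:
  a polynomial g of degree \<le> d with f - g orthogonal to C_d[z]
  (determined up to the null space N).\<close>
definition proj_d :: "(bipoly \<Rightarrow> complex) \<Rightarrow> nat \<Rightarrow> complex poly \<Rightarrow> complex poly" where
  "proj_d L d f = (SOME g. degree g \<le> d \<and> (\<forall>h. degree h \<le> d \<longrightarrow> ipL L (f - g) h = 0))"

definition Mop :: "(bipoly \<Rightarrow> complex) \<Rightarrow> nat \<Rightarrow> complex poly \<Rightarrow> complex poly" where
  "Mop L d g = proj_d L d ([:0, 1:] * g)"

definition polyM1 :: "(bipoly \<Rightarrow> complex) \<Rightarrow> nat \<Rightarrow> complex poly \<Rightarrow> complex poly" where
  "polyM1 L d p = (\<Sum>j\<le>degree p. smult (coeff p j) ((Mop L d ^^ j) 1))"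

end

theory Submission
  imports Defs
begin

text \<open>
  Write \<open>E\<^sub>j = z\<^sup>j - M\<^sup>j 1\<close>. By induction on \<open>j \<le> d + 1\<close>, \<open>E\<^sub>j\<close> is orthogonal to
  \<open>\<complex>\<^sub>d[z]\<close>: one has \<open>E\<^sub>j\<^sub>+\<^sub>1 = z E\<^sub>j + (z M\<^sup>j 1 - \<pi>\<^sub>d z M\<^sup>j 1)\<close>, where the second summand
  is orthogonal to \<open>\<complex>\<^sub>d[z]\<close> by construction, and for \<open>j \<le> d\<close> the vector \<open>E\<^sub>j \<in> \<complex>\<^sub>d[z]\<close>
  is orthogonal to itself, i.e. null; hence so is \<open>z E\<^sub>j\<close> by well-definedness of \<open>M\<^sub>z\<close>,
  and null vectors are orthogonal to everything by Cauchy--Schwarz. Consequently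
  \<open>p - p(M) 1\<close> is null if \<open>deg p \<le> d\<close> and orthogonal to \<open>\<complex>\<^sub>d[z]\<close> if \<open>deg p = d + 1\<close>;
  expanding \<open>\<langle>p(M) 1, q(M) 1\<rangle>\<close> then leaves only \<open>\<langle>p, q\<rangle> = L(p q\<^sup>*)\<close>.
\<close>

lemma in_bipoly_herm:
  assumes "degree p + degree q \<le> n"
  shows "in_bipoly n (herm p q)"
  unfolding in_bipoly_def herm_def
proof (intro allI impI)
  fix j k assume "n < j + k"
  with assms have "degree p < j \<or> degree q < k" by arith
  then show "coeff p j * cnj (coeff q k) = 0" by (auto simp: coeff_eq_0)
qed

locale sesquilinear_functional =
  fixes n :: nat and L :: "bipoly \<Rightarrow> complex"
  assumes lin: "lin_on (2 * n) L"
begin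

lemma in_bipoly_herm_double:
  "degree p \<le> n \<Longrightarrow> degree q \<le> n \<Longrightarrow> in_bipoly (2 * n) (herm p q)"
  by (rule in_bipoly_herm) simp

lemma ipL_add_left:
  assumes "degree p \<le> n" "degree p' \<le> n" "degree q \<le> n"
  shows "ipL L (p + p') q = ipL L p q + ipL L p' q"
proof -
  have "herm (p + p') q = (\<lambda>j k. herm p q j k + herm p' q j k)"
    by (auto simp: herm_def fun_eq_iff algebra_simps)
  then show ?thesis
    using lin assms in_bipoly_herm_double[of p q] in_bipoly_herm_double[of p' q]
    unfolding ipL_def lin_on_def by simp
qed

lemma ipL_add_right:
  assumes "degree p \<le> n" "degree q \<le> n" "degree q' \<le> n"
  shows "ipL L p (q + q') = ipL L p q + ipL L p q'"
proof -
  have "herm p (q + q') = (\<lambda>j k. herm p q j k + herm p q' j k)"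
    by (auto simp: herm_def fun_eq_iff algebra_simps)
  then show ?thesis
    using lin assms in_bipoly_herm_double[of p q] in_bipoly_herm_double[of p q']
    unfolding ipL_def lin_on_def by simp
qed

lemma ipL_smult_left:
  assumes "degree p \<le> n" "degree q \<le> n"
  shows "ipL L (smult c p) q = c * ipL L p q"
proof -
  have "herm (smult c p) q = (\<lambda>j k. c * herm p q j k)"
    by (auto simp: herm_def fun_eq_iff algebra_simps)
  then show ?thesis using lin assms in_bipoly_herm_double[of p q]
    unfolding ipL_def lin_on_def by simp
qed

lemma ipL_smult_right:
  assumes "degree p \<le> n" "degree q \<le> n"
  shows "ipL L p (smult c q) = cnj c * ipL L p q"
proof -
  have "herm p (smult c q) = (\<lambda>j k. cnj c * herm p q j k)"
    by (auto simp: herm_def fun_eq_iff algebra_simps)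
  then show ?thesis using lin assms in_bipoly_herm_double[of p q]
    unfolding ipL_def lin_on_def by simp
qed

lemma ipL_zero_left: "degree q \<le> n \<Longrightarrow> ipL L 0 q = 0"
  using ipL_smult_left[of 0 q 0] by simp

lemma ipL_zero_right: "degree p \<le> n \<Longrightarrow> ipL L p 0 = 0"
  using ipL_smult_right[of p 0 0] by simp

lemma ipL_diff_left:
  assumes "degree p \<le> n" "degree p' \<le> n" "degree q \<le> n"
  shows "ipL L (p - p') q = ipL L p q - ipL L p' q"
  using ipL_add_left[of "p - p'" p' q] assms degree_diff_le[of p n p'] by simp

lemma ipL_diff_right:
  assumes "degree p \<le> n" "degree q \<le> n" "degree q' \<le> n"
  shows "ipL L p (q - q') = ipL L p q - ipL L p q'"
  using ipL_add_right[of p "q - q'" q'] assms degree_diff_le[of q n q'] by simp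

lemma ipL_sum_left:
  assumes "finite A" "\<And>j. j \<in> A \<Longrightarrow> degree (f j) \<le> n" "degree q \<le> n"
  shows "ipL L (\<Sum>j\<in>A. f j) q = (\<Sum>j\<in>A. ipL L (f j) q)"
  using assms
proof (induction A rule: finite_induct)
  case empty
  then show ?case using ipL_zero_left by simp
next
  case (insert x A)
  then show ?case
    using ipL_add_left[of "f x" "sum f A" q] degree_sum_le[of A f n] by simp
qed

lemma ipL_self_add_smult:
  assumes v: "degree v \<le> n" and h: "degree h \<le> n"
  shows "ipL L (v + smult s h) (v + smult s h)
    = ipL L v v + cnj s * ipL L v h + s * ipL L h v + s * cnj s * ipL L h h"
proof -
  have sh: "degree (smult s h) \<le> n" and vsh: "degree (v + smult s h) \<le> n"
    using v h by (simp_all add: degree_add_le)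
  have "ipL L (v + smult s h) (v + smult s h)
      = ipL L v v + ipL L v (smult s h) + (ipL L (smult s h) v + ipL L (smult s h) (smult s h))"
    using ipL_add_left[OF v sh vsh] ipL_add_right[OF v v sh] ipL_add_right[OF sh v sh] by simp
  then show ?thesis
    using ipL_smult_left[OF h v] ipL_smult_left[OF h sh] ipL_smult_right[OF v h]
      ipL_smult_right[OF h h]
    by (simp add: algebra_simps)
qed

end

locale psd_functional = sesquilinear_functional +
  assumes real: "real_on (2 * n) L"
    and pos: "\<forall>f :: complex poly. degree f \<le> n \<longrightarrow>
                Im (L (herm f f)) = 0 \<and> 0 \<le> Re (L (herm f f))"
begin

lemma ipL_commute:
  assumes "degree p \<le> n" "degree q \<le> n"
  shows "ipL L q p = cnj (ipL L p q)"
proof -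
  have "biconj (herm p q) = herm q p"
    by (auto simp: biconj_def herm_def fun_eq_iff)
  then show ?thesis
    using real in_bipoly_herm_double[OF assms] unfolding real_on_def ipL_def by metis
qed

lemma ipL_self_real_nonneg:
  assumes "degree f \<le> n"
  shows "ipL L f f = complex_of_real (Re (ipL L f f))" "Re (ipL L f f) \<ge> 0"
  using pos assms unfolding ipL_def by (auto simp: complex_eq_iff)

text \<open>Cauchy--Schwarz in the form needed: test positivity on \<open>v - t \<langle>v, h\<rangle> h\<close> with
  \<open>t = 1 / (\<langle>h, h\<rangle> + 1)\<close>, which yields \<open>|\<langle>v, h\<rangle>|\<^sup>2 (t\<^sup>2 \<langle>h, h\<rangle> - 2 t) \<ge> 0\<close>.\<close>
lemma null_ipL_left:
  assumes v: "degree v \<le> n" and h: "degree h \<le> n" and null: "ipL L v v = 0"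
  shows "ipL L v h = 0"
proof -
  define a where "a = ipL L v h"
  define c where "c = Re (ipL L h h)"
  define t where "t = 1 / (c + 1)"
  define s where "s = - complex_of_real t * a"
  have c: "ipL L h h = complex_of_real c" "c \<ge> 0"
    using ipL_self_real_nonneg[OF h] by (simp_all add: c_def)
  have t: "t > 0" "t * c < 1"
    using c(2) by (auto simp: t_def)
  have aa: "a * cnj a = complex_of_real ((cmod a)\<^sup>2)"
    using complex_norm_square[of a] by simp
  have "ipL L (v + smult s h) (v + smult s h)
      = complex_of_real ((cmod a)\<^sup>2 * (t\<^sup>2 * c - 2 * t))"
  proof -
    have "ipL L h v = cnj a" using ipL_commute[OF v h] by (simp add: a_def)
    then have "ipL L (v + smult s h) (v + smult s h)
        = (t * t * c - 2 * t) * (a * cnj a)"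
      using ipL_self_add_smult[OF v h, of s] null c(1)
      by (simp add: s_def a_def[symmetric] algebra_simps)
    then show ?thesis using aa by (simp add: power2_eq_square mult.commute)
  qed
  moreover have "degree (v + smult s h) \<le> n"
    using v h by (simp add: degree_add_le)
  ultimately have "0 \<le> (cmod a)\<^sup>2 * (t\<^sup>2 * c - 2 * t)"
    using ipL_self_real_nonneg(2) by fastforce
  moreover have "t\<^sup>2 * c - 2 * t < 0"
    using t by (simp add: power2_eq_square)
  ultimately have "(cmod a)\<^sup>2 \<le> 0"
    by (simp add: zero_le_mult_iff)
  then show ?thesis by (simp add: a_def)
qed

lemma null_ipL_right:
  "degree v \<le> n \<Longrightarrow> degree h \<le> n \<Longrightarrow> ipL L v v = 0 \<Longrightarrow> ipL L h v = 0"
  by (metis ipL_commute null_ipL_left complex_cnj_zero)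

lemma exists_smult_orthogonal:
  assumes v: "degree v \<le> n" and e: "degree e \<le> n"
  shows "\<exists>\<alpha>. ipL L (v - smult \<alpha> e) e = 0"
proof
  define \<alpha> where "\<alpha> = ipL L v e / ipL L e e"
  have "ipL L (v - smult \<alpha> e) e = ipL L v e - \<alpha> * ipL L e e"
    using ipL_diff_left[OF v _ e] ipL_smult_left[OF e e] e by simp
  also have "\<dots> = 0" \<comment> \<open>if \<open>e\<close> is null, then \<open>\<alpha> = 0\<close> (division by zero) and \<open>\<langle>v, e\<rangle> = 0\<close>\<close>
    using null_ipL_right[OF e v] by (cases "ipL L e e = 0") (simp_all add: \<alpha>_def)
  finally show "ipL L (v - smult \<alpha> e) e = 0" .
qed

text \<open>Projection onto the span of \<open>1, z, \<dots>, z\<^sup>m\<^sup>-\<^sup>1\<close>, built one monomial at a time as in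
  Gram--Schmidt. The span is described by vanishing coefficients so that \<open>m = 0\<close> gives
  the zero space.\<close>
lemma exists_orthogonal_projection:
  assumes "m \<le> n" "degree f \<le> n"
  shows "\<exists>g. (\<forall>i\<ge>m. coeff g i = 0) \<and>
             (\<forall>h. (\<forall>i\<ge>m. coeff h i = 0) \<longrightarrow> ipL L (f - g) h = 0)"
  using assms
proof (induction m arbitrary: f)
  case 0
  have "\<forall>h. (\<forall>i\<ge>0. coeff h i = 0) \<longrightarrow> ipL L (f - 0) h = 0"
    using ipL_zero_right[OF "0.prems"(2)] by (metis diff_zero coeff_0 le0 poly_eqI)
  then show ?case by (intro exI[of _ 0]) simp
next
  case (Suc m f)
  have m: "m \<le> n" using Suc.prems by simp
  have span_degree: "degree h \<le> n" if "\<forall>i\<ge>m. coeff h i = 0" for h :: "complex poly"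
    using that m by (intro degree_le) auto
  obtain g0 where g0: "\<forall>i\<ge>m. coeff g0 i = 0"
    "\<forall>h. (\<forall>i\<ge>m. coeff h i = 0) \<longrightarrow> ipL L (f - g0) h = 0"
    using Suc.IH[OF m Suc.prems(2)] by blast
  obtain g1 where g1: "\<forall>i\<ge>m. coeff g1 i = 0"
    "\<forall>h. (\<forall>i\<ge>m. coeff h i = 0) \<longrightarrow> ipL L (monom 1 m - g1) h = 0"
    using Suc.IH[OF m, of "monom 1 m"] Suc.prems(1) by (auto simp: degree_monom_eq)
  define e where "e = monom 1 m - g1"
  have de: "degree e \<le> n"
    unfolding e_def using Suc.prems(1) span_degree[OF g1(1)]
    by (intro degree_diff_le) (auto simp: degree_monom_eq)
  have dfg0: "degree (f - g0) \<le> n"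
    using Suc.prems(2) span_degree[OF g0(1)] by (intro degree_diff_le)
  obtain \<alpha> where \<alpha>: "ipL L (f - g0 - smult \<alpha> e) e = 0"
    using exists_smult_orthogonal[OF dfg0 de] by blast
  have dfg: "degree (f - g0 - smult \<alpha> e) \<le> n"
    using degree_diff_le[OF dfg0, of "smult \<alpha> e"] de by simp
  show ?case
  proof (intro exI[of _ "g0 + smult \<alpha> e"] conjI allI impI)
    fix i assume "Suc m \<le> i"
    then show "coeff (g0 + smult \<alpha> e) i = 0" using g0(1) g1(1) by (simp add: e_def)
  next
    fix h :: "complex poly" assume h: "\<forall>i\<ge>Suc m. coeff h i = 0"
    define h1 where "h1 = h - smult (coeff h m) e"
    have h1: "\<forall>i\<ge>m. coeff h1 i = 0"
      using h g1(1) by (auto simp: h1_def e_def le_Suc_eq)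
    have "ipL L (f - g0 - smult \<alpha> e) h1 = ipL L (f - g0) h1 - \<alpha> * ipL L e h1"
      using ipL_diff_left[OF dfg0 _ span_degree[OF h1]] ipL_smult_left[OF de span_degree[OF h1]]
        de by simp
    also have "\<dots> = 0" using g0(2) g1(2) h1 by (simp add: e_def)
    finally have "ipL L (f - g0 - smult \<alpha> e) (h1 + smult (coeff h m) e) = 0"
      using ipL_add_right[OF dfg span_degree[OF h1]] ipL_smult_right[OF dfg de] \<alpha> de by simp
    then show "ipL L (f - (g0 + smult \<alpha> e)) h = 0" by (simp add: h1_def diff_diff_eq)
  qed
qed

lemma
  assumes "d < n" "degree f \<le> n"
  shows degree_proj_d: "degree (proj_d L d f) \<le> d"
    and proj_d_orthogonal: "degree h \<le> d \<Longrightarrow> ipL L (f - proj_d L d f) h = 0"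
proof -
  obtain g where g: "\<forall>i\<ge>d+1. coeff g i = 0"
    "\<forall>h. (\<forall>i\<ge>d+1. coeff h i = 0) \<longrightarrow> ipL L (f - g) h = 0"
    using exists_orthogonal_projection[of "d+1" f] assms by auto
  have "degree g \<le> d \<and> (\<forall>h. degree h \<le> d \<longrightarrow> ipL L (f - g) h = 0)"
    using g by (auto intro!: degree_le simp: coeff_eq_0)
  then have "degree (proj_d L d f) \<le> d \<and>
      (\<forall>h. degree h \<le> d \<longrightarrow> ipL L (f - proj_d L d f) h = 0)"
    unfolding proj_d_def by (rule someI)
  then show "degree (proj_d L d f) \<le> d"
    and "degree h \<le> d \<Longrightarrow> ipL L (f - proj_d L d f) h = 0" by auto
qed

end

locale moment_functional = psd_functional "d + 1" L for d L +
  assumes wd: "\<forall>p :: complex poly. degree p \<le> d \<longrightarrow> L (herm p p) = 0 \<longrightarrow>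
                L (herm ([:0, 1:] * p) ([:0, 1:] * p)) = 0"
begin

lemma degree_Mop_power_one: "degree ((Mop L d ^^ j) 1) \<le> d"
proof (induction j)
  case (Suc j)
  then have "degree ([:0, 1:] * (Mop L d ^^ j) 1) \<le> d + 1"
    using degree_mult_le[of "[:0, 1:]" "(Mop L d ^^ j) 1"] by simp
  then show ?case unfolding funpow.simps comp_def Mop_def by (rule degree_proj_d[OF less_add_one])
qed simp

lemma degree_polyM1: "degree (polyM1 L d p) \<le> d"
  unfolding polyM1_def by (intro degree_sum_le) (auto intro: order.trans[OF _ degree_Mop_power_one])

lemma residual_orthogonal_low:
  assumes "j \<le> d + 1" "degree h \<le> d"
  shows "ipL L (monom 1 j - (Mop L d ^^ j) 1) h = 0"
  using assms
proof (induction j arbitrary: h)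
  case 0
  then show ?case using ipL_zero_left by simp
next
  case (Suc j)
  define r where "r = (Mop L d ^^ j) 1"
  define E where "E = monom 1 j - r"
  have dr: "degree r \<le> d" using degree_Mop_power_one by (simp add: r_def)
  have dE: "degree E \<le> d"
    using Suc.prems dr by (auto simp: E_def degree_monom_eq intro: degree_diff_le)
  have dXE: "degree ([:0, 1:] * E) \<le> d + 1" and dXr: "degree ([:0, 1:] * r) \<le> d + 1"
    using degree_mult_le[of "[:0, 1:]" E] degree_mult_le[of "[:0, 1:]" r] dE dr by simp_all
  have "ipL L E E = 0" using Suc dE by (simp add: E_def r_def)
  then have "ipL L ([:0, 1:] * E) ([:0, 1:] * E) = 0" using wd dE by (simp add: ipL_def)
  then have XE: "ipL L ([:0, 1:] * E) h = 0"
    using null_ipL_left[OF dXE] Suc.prems by simp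
  have "monom 1 (Suc j) - (Mop L d ^^ Suc j) 1
      = [:0, 1:] * E + ([:0, 1:] * r - proj_d L d ([:0, 1:] * r))"
    by (simp add: E_def r_def Mop_def monom_Suc algebra_simps)
  moreover have "degree ([:0, 1:] * r - proj_d L d ([:0, 1:] * r)) \<le> d + 1"
    using degree_diff_le[OF dXr] degree_proj_d[OF less_add_one dXr] by simp
  ultimately show ?case
    using ipL_add_left[OF dXE] XE proj_d_orthogonal[OF _ dXr] Suc.prems by simp
qed

text \<open>For \<open>j \<le> d\<close> the residual lies in \<open>\<complex>\<^sub>d[z]\<close> and is orthogonal to it, hence null.\<close>
lemma residual_orthogonal:
  assumes "j \<le> d + 1" "degree h \<le> d + 1" "j + degree h \<le> 2 * d + 1"
  shows "ipL L (monom 1 j - (Mop L d ^^ j) 1) h = 0"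
proof (cases "j \<le> d")
  case True
  define E where "E = monom 1 j - (Mop L d ^^ j) 1"
  have dE: "degree E \<le> d"
    using True degree_Mop_power_one by (auto simp: E_def degree_monom_eq intro: degree_diff_le)
  then have "ipL L E E = 0" using residual_orthogonal_low True by (simp add: E_def)
  then show ?thesis using null_ipL_left[of E h] dE assms(2) by (simp add: E_def)
next
  case False
  then show ?thesis using residual_orthogonal_low assms by simp
qed

lemma poly_minus_polyM1:
  "p - polyM1 L d p = (\<Sum>j\<le>degree p. smult (coeff p j) (monom 1 j - (Mop L d ^^ j) 1))"
proof -
  have "p = (\<Sum>j\<le>degree p. smult (coeff p j) (monom 1 j))"
    using poly_as_sum_of_monoms[of p] by (simp add: smult_monom)
  then show ?thesis
    unfolding polyM1_def by (simp add: sum_subtractf smult_diff_right)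
qed

lemma poly_minus_polyM1_orthogonal:
  assumes "degree p \<le> d + 1" "degree h \<le> d + 1" "degree p + degree h \<le> 2 * d + 1"
  shows "ipL L (p - polyM1 L d p) h = 0"
proof -
  have terms: "degree (smult (coeff p j) (monom 1 j - (Mop L d ^^ j) 1)) \<le> d + 1
      \<and> ipL L (smult (coeff p j) (monom 1 j - (Mop L d ^^ j) 1)) h = 0"
    if "j \<le> degree p" for j
  proof -
    have "degree (monom 1 j - (Mop L d ^^ j) 1) \<le> d + 1"
      using that assms(1) degree_Mop_power_one[of j]
      by (intro degree_diff_le) (auto simp: degree_monom_eq)
    then show ?thesis
      using ipL_smult_left residual_orthogonal[of j h] that assms by simp
  qed
  have "ipL L (p - polyM1 L d p) h
      = (\<Sum>j\<le>degree p. ipL L (smult (coeff p j) (monom 1 j - (Mop L d ^^ j) 1)) h)"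
    unfolding poly_minus_polyM1 using terms assms(2) by (intro ipL_sum_left) auto
  then show ?thesis using terms by simp
qed

lemma ipL_polyM1:
  assumes p: "degree p \<le> d + 1" and q: "degree q \<le> d + 1"
    and pq: "degree p + degree q \<le> 2 * d + 1"
  shows "ipL L (polyM1 L d p) (polyM1 L d q) = ipL L p q"
proof -
  have p': "degree (polyM1 L d p) \<le> d + 1" and q': "degree (polyM1 L d q) \<le> d + 1"
    using degree_polyM1[of p] degree_polyM1[of q] by linarith+
  have "ipL L (polyM1 L d p) (polyM1 L d q)
      = ipL L p (polyM1 L d q) - ipL L (p - polyM1 L d p) (polyM1 L d q)"
    using ipL_diff_left[OF p p' q'] by simp
  also have "\<dots> = ipL L p (polyM1 L d q)"
    using poly_minus_polyM1_orthogonal[OF p q'] p degree_polyM1[of q] by simp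
  also have "\<dots> = ipL L p q - cnj (ipL L (q - polyM1 L d q) p)"
    using ipL_diff_right[OF p q q'] ipL_commute[OF _ p, of "q - polyM1 L d q"] q q'
    by (simp add: degree_diff_le)
  also have "\<dots> = ipL L p q"
    using poly_minus_polyM1_orthogonal[OF q p] pq by simp
  finally show ?thesis .
qed

end

theorem lemma2:
  fixes d :: nat and L :: "bipoly \<Rightarrow> complex"
  assumes lin: "lin_on (2*d+2) L"
    and real: "real_on (2*d+2) L"
    and pos: "\<forall>f :: complex poly. degree f \<le> d + 1 \<longrightarrow>
                 Im (L (herm f f)) = 0 \<and> 0 \<le> Re (L (herm f f))"
    and wd: "\<forall>p :: complex poly. degree p \<le> d \<longrightarrow> L (herm p p) = 0 \<longrightarrow>
                 L (herm ([:0, 1:] * p) ([:0, 1:] * p)) = 0"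
  shows "\<forall>p q :: complex poly. degree p \<le> d + 1 \<longrightarrow> degree q \<le> d + 1 \<longrightarrow>
           degree p + degree q \<le> 2*d + 1 \<longrightarrow>
           L (herm p q) = ipL L (polyM1 L d p) (polyM1 L d q)"
proof -
  interpret moment_functional d L
    by unfold_locales (use lin real pos wd in simp_all)
  show ?thesis using ipL_polyM1 by (simp add: ipL_def)
qed

end
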